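(* Let $f\colon\mathbb R\to\mathbb R$ be continuous with $|f(x)|\leqslant a\cosh(bx)$ for all $x$, for some $a>0$, $b\in\mathbb R$. Fix $\lambda>0$. Let $\rho$ be a compactly supported Borel probability measure on $\mathbb R$, let $d>0$ be such that $\operatorname{supp}\rho\subset[-d,d]$, and for $n\geqslant1$ let $I^\rho_n=[-nd,nd]$. Then for every $\epsilon>0$ and every integer $n_0>0$ there exists a real trigonometric polynomial $p$ such that $\sup_{x\in I^\rho_{n_0}}|f(x)-p(x)|<\epsilon$, $\sup_{x\in\mathbb R}|p(x)|<\sup_{x\in I^\rho_{n_0}}|f(x)|+\epsilon$, and, for every $x\in\operatorname{supp}\rho$, $$\sum_{n=0}^{n_0-1}\frac{e^{-\lambda}\lambda^n}{(n+1)!}\langle\delta_x*\rho^{*n},|f-p|\rangle<\epsilon\quad\text{and}\quad\sum_{n=0}^{n_0-1}\frac{e^{-\lambda}\lambda^n}{(n+1)!}\langle\rho^{*(n+1)},|f-p|\rangle<\epsilon.$$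
   Context: A trigonometric polynomial of order $n$ and period $T>0$ is a function $p(x)=\sum_{k=-n}^n c_ke^{2\pi ikx/T}$ with $c_k\in\mathbb C$; it is real if $p(x)\in\mathbb R$ for all real $x$. $\langle\tau,\phi\rangle=\int\phi\,d\tau$; $*$ is convolution of measures, $\rho^{*0}=\delta_0$; $\delta_a$ is the Dirac measure at $a$. *)

theory Defs
  imports "HOL-Probability.Probability" "HOL-Probability.Convolution"
begin

definition measure_support :: "real measure \<Rightarrow> real set" where
  "measure_support M = {x. \<forall>U. open U \<and> x \<in> U \<longrightarrow> emeasure M U > 0}"

fun conv_pow :: "real measure \<Rightarrow> nat \<Rightarrow> real measure" where
  "conv_pow M 0 = return borel 0"
| "conv_pow M (Suc n) = convolution M (conv_pow M n)"

definition real_trig_poly :: "(real \<Rightarrow> real) \<Rightarrow> bool" where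
  "real_trig_poly p \<longleftrightarrow> (\<exists>T>0. \<exists>n::nat. \<exists>c::int \<Rightarrow> complex.
     \<forall>x. complex_of_real (p x) =
        (\<Sum>k\<in>{-int n..int n}. c k * exp (2 * of_real pi * \<i> * of_int k * of_real x / of_real T)))"

end

theory Submission
  imports Defs
begin

text \<open>Only the values of \<open>f\<close> on \<open>[-L, L]\<close> with \<open>L = n0 d\<close> matter: for \<open>x \<in> supp \<rho>\<close> and
  \<open>n < n0\<close> the measures \<open>\<delta>\<^sub>x * \<rho>\<^sup>*\<^sup>n\<close> and \<open>\<rho>\<^sup>*\<^sup>(\<^sup>n\<^sup>+\<^sup>1\<^sup>)\<close> are probability measures concentrated
  on \<open>[-L, L]\<close>, so each weighted sum is at most the uniform error on \<open>[-L, L]\<close> times the total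
  weight. With \<open>c = \<pi> / (2 L)\<close>, a Weierstrass polynomial \<open>g\<close> approximating
  \<open>u \<mapsto> f (arcsin u / c)\<close> on \<open>[-1, 1]\<close> yields the trigonometric polynomial \<open>g (sin (c x))\<close> of
  period \<open>4 L\<close>; it is close to \<open>f\<close> on \<open>[-L, L]\<close>, and since \<open>sin (c x)\<close> stays in \<open>[-1, 1]\<close>, its
  supremum over \<open>\<real>\<close> exceeds that of \<open>\<bar>f\<bar>\<close> on \<open>[-L, L]\<close> by at most the error.\<close>

definition fourier_mode :: "real \<Rightarrow> int \<Rightarrow> real \<Rightarrow> complex" where
  "fourier_mode T k x = exp (2 * of_real pi * \<i> * of_int k * of_real x / of_real T)"

definition trig_poly :: "real \<Rightarrow> (real \<Rightarrow> complex) \<Rightarrow> bool" where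
  "trig_poly T p \<longleftrightarrow> (\<exists>K c. finite K \<and> (\<forall>x. p x = (\<Sum>k\<in>K. c k * fourier_mode T k x)))"

lemma fourier_mode_zero [simp]: "fourier_mode T 0 x = 1"
  by (simp add: fourier_mode_def)

lemma fourier_mode_mult: "fourier_mode T k x * fourier_mode T j x = fourier_mode T (k + j) x"
  unfolding fourier_mode_def by (simp add: exp_add[symmetric] add_divide_distrib algebra_simps)

lemma sum_zero_extension:
  fixes c m :: "'a \<Rightarrow> 'b::semiring_0"
  assumes "finite K'" "K \<subseteq> K'"
  shows "(\<Sum>k\<in>K'. (if k \<in> K then c k else 0) * m k) = (\<Sum>k\<in>K. c k * m k)"
proof -
  have "(\<Sum>k\<in>K'. (if k \<in> K then c k else 0) * m k) = (\<Sum>k\<in>K'. if k \<in> K then c k * m k else 0)"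
    by (intro sum.cong) auto
  also have "\<dots> = (\<Sum>k\<in>K. c k * m k)"
    using assms by (simp add: sum.inter_restrict[symmetric] Int_absorb1)
  finally show ?thesis .
qed

lemma trig_poly_const: "trig_poly T (\<lambda>x. c)"
  unfolding trig_poly_def by (intro exI[of _ "{0}"] exI[of _ "\<lambda>_. c"]) simp

lemma trig_poly_add:
  assumes "trig_poly T p" "trig_poly T q"
  shows "trig_poly T (\<lambda>x. p x + q x)"
proof -
  obtain K c where K: "finite K" "\<And>x. p x = (\<Sum>k\<in>K. c k * fourier_mode T k x)"
    using assms(1) unfolding trig_poly_def by auto
  obtain J e where J: "finite J" "\<And>x. q x = (\<Sum>k\<in>J. e k * fourier_mode T k x)"
    using assms(2) unfolding trig_poly_def by auto
  define ce where "ce k = (if k \<in> K then c k else 0) + (if k \<in> J then e k else 0)" for k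
  have "p x + q x = (\<Sum>k\<in>K \<union> J. ce k * fourier_mode T k x)" for x
    using sum_zero_extension[of "K \<union> J" K c] sum_zero_extension[of "K \<union> J" J e] K J
    by (simp add: ce_def distrib_right sum.distrib)
  then show ?thesis
    unfolding trig_poly_def using K J by (intro exI[of _ "K \<union> J"] exI[of _ ce]) auto
qed

lemma trig_poly_mult:
  assumes "trig_poly T p" "trig_poly T q"
  shows "trig_poly T (\<lambda>x. p x * q x)"
proof -
  obtain K c where K: "finite K" "\<And>x. p x = (\<Sum>k\<in>K. c k * fourier_mode T k x)"
    using assms(1) unfolding trig_poly_def by auto
  obtain J e where J: "finite J" "\<And>x. q x = (\<Sum>k\<in>J. e k * fourier_mode T k x)"
    using assms(2) unfolding trig_poly_def by auto
  define s where "s = (\<lambda>(k, j). k + j :: int)"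
  define ce where "ce l = (\<Sum>z\<in>{z \<in> K \<times> J. s z = l}. c (fst z) * e (snd z))" for l
  have "p x * q x = (\<Sum>l\<in>s ` (K \<times> J). ce l * fourier_mode T l x)" for x
  proof -
    have "p x * q x = (\<Sum>z\<in>K \<times> J. c (fst z) * fourier_mode T (fst z) x * (e (snd z) * fourier_mode T (snd z) x))"
      unfolding K(2) J(2) sum_product sum.cartesian_product by (simp add: case_prod_beta)
    also have "\<dots> = (\<Sum>z\<in>K \<times> J. c (fst z) * e (snd z) * fourier_mode T (s z) x)"
      by (intro sum.cong refl) (simp add: s_def case_prod_beta fourier_mode_mult[symmetric] mult_ac)
    also have "\<dots> = (\<Sum>l\<in>s ` (K \<times> J). ce l * fourier_mode T l x)"
      unfolding ce_def sum_distrib_right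
      using sum.image_gen[of "K \<times> J" "\<lambda>z. c (fst z) * e (snd z) * fourier_mode T (s z) x" s] K(1) J(1)
      by (auto intro!: sum.cong)
    finally show ?thesis .
  qed
  then show ?thesis
    unfolding trig_poly_def using K J by (intro exI[of _ "s ` (K \<times> J)"] exI[of _ ce]) auto
qed

lemma trig_poly_sin: "trig_poly T (\<lambda>x. complex_of_real (sin (2 * pi * x / T)))"
proof -
  define \<theta> where "\<theta> x = 2 * of_real pi * of_real x / (of_real T :: complex)" for x
  have "complex_of_real (sin (2 * pi * x / T)) =
      (\<Sum>k\<in>{1, -1}. (if k = 1 then 1 / (2 * \<i>) else - 1 / (2 * \<i>)) * fourier_mode T k x)" for x
  proof -
    have "fourier_mode T 1 x = exp (\<i> * \<theta> x)" "fourier_mode T (-1) x = exp (- (\<i> * \<theta> x))"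
      unfolding fourier_mode_def \<theta>_def by (simp_all add: ac_simps)
    moreover have "complex_of_real (sin (2 * pi * x / T)) = sin (\<theta> x)"
      by (simp add: \<theta>_def sin_of_real[symmetric])
    ultimately show ?thesis
      unfolding sin_exp_eq by (simp add: diff_divide_distrib algebra_simps)
  qed
  then show ?thesis
    unfolding trig_poly_def
    by (intro exI[of _ "{1, -1}"] exI[of _ "\<lambda>k. if k = 1 then 1 / (2 * \<i>) else - 1 / (2 * \<i>)"]) simp
qed

lemma trig_poly_polynomial_sin:
  assumes "real_polynomial_function g"
  shows "trig_poly T (\<lambda>x. complex_of_real (g (sin (2 * pi * x / T))))"
  using assms
proof (induction g)
  case (linear h)
  then obtain c where "h = (\<lambda>x. x * c)"
    by (auto simp: real_bounded_linear)
  then show ?case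
    using trig_poly_mult[OF trig_poly_sin trig_poly_const] by simp
next
  case (const c)
  show ?case by (rule trig_poly_const)
next
  case (add f g)
  then show ?case using trig_poly_add[OF add.IH] by simp
next
  case (mult f g)
  then show ?case using trig_poly_mult[OF mult.IH] by simp
qed

lemma real_trig_poly_if_trig_poly:
  assumes "T > 0" "trig_poly T (\<lambda>x. complex_of_real (p x))"
  shows "real_trig_poly p"
proof -
  obtain K c where K: "finite K" "\<And>x. complex_of_real (p x) = (\<Sum>k\<in>K. c k * fourier_mode T k x)"
    using assms(2) unfolding trig_poly_def by auto
  define n where "n = nat (\<Sum>k\<in>K. \<bar>k\<bar>)"
  have "K \<subseteq> {-int n..int n}"
  proof
    fix k assume "k \<in> K"
    then have "\<bar>k\<bar> \<le> (\<Sum>k\<in>K. \<bar>k\<bar>)"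
      using K(1) by (intro member_le_sum) auto
    then show "k \<in> {-int n..int n}"
      by (simp add: n_def abs_le_iff)
  qed
  then have "complex_of_real (p x) =
      (\<Sum>k\<in>{-int n..int n}. (if k \<in> K then c k else 0) * fourier_mode T k x)" for x
    unfolding K(2) by (rule sum_zero_extension[symmetric, OF finite_atLeastAtMost_int])
  then show ?thesis
    unfolding real_trig_poly_def fourier_mode_def using assms(1)
    by (intro exI[of _ T] conjI exI[of _ n] exI[of _ "\<lambda>k. if k \<in> K then c k else 0"]) auto
qed

lemma real_trig_poly_approximation:
  fixes f :: "real \<Rightarrow> real"
  assumes f: "continuous_on {-L..L} f" and L: "L > 0" and \<delta>: "\<delta> > 0"
  obtains p where "real_trig_poly p" "\<And>x. x \<in> {-L..L} \<Longrightarrow> \<bar>f x - p x\<bar> < \<delta>"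
    "\<And>x. \<bar>p x\<bar> < (SUP x\<in>{-L..L}. \<bar>f x\<bar>) + \<delta>"
proof -
  define c where "c = pi / (2 * L)"
  have c: "c > 0" "c * L = pi / 2"
    using L by (simp_all add: c_def)
  have arcsin_sin_scaled: "arcsin (sin (c * x)) / c = x" if "x \<in> {-L..L}" for x
  proof -
    have "\<bar>c * x\<bar> \<le> c * L"
      using that c(1) by (auto simp: abs_mult intro!: mult_left_mono)
    then show ?thesis
      using c by (subst arcsin_sin) auto
  qed
  have arcsin_scaled_range: "arcsin u / c \<in> {-L..L}" if "u \<in> {-1..1}" for u
  proof -
    have "\<bar>arcsin u\<bar> \<le> c * L"
      using arcsin_bounded[of u] that c(2) by auto
    then show ?thesis
      using c(1) by (auto simp: abs_le_iff pos_divide_le_eq pos_le_divide_eq mult.commute)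
  qed
  have "continuous_on {-1..1} (\<lambda>u. f (arcsin u / c))"
    by (rule continuous_on_compose2[OF f]) (use c(1) arcsin_scaled_range in \<open>auto intro!: continuous_intros\<close>)
  then obtain g where g: "real_polynomial_function g"
      "\<And>u. u \<in> {-1..1} \<Longrightarrow> \<bar>f (arcsin u / c) - g u\<bar> < \<delta>"
    using Stone_Weierstrass_real_polynomial_function[OF compact_Icc _ \<delta>] by blast
  define p where "p x = g (sin (2 * pi * x / (4 * L)))" for x
  have p_eq: "p x = g (sin (c * x))" for x
    using L by (simp add: p_def c_def field_simps)
  have "bdd_above ((\<lambda>x. \<bar>f x\<bar>) ` {-L..L})"
    using f by (intro bounded_imp_bdd_above compact_imp_bounded compact_continuous_image continuous_intros) auto
  then have f_le_Sup: "\<bar>f x\<bar> \<le> (SUP x\<in>{-L..L}. \<bar>f x\<bar>)" if "x \<in> {-L..L}" for x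
    using that by (rule cSUP_upper2) simp
  show ?thesis
  proof
    show "real_trig_poly p"
      using real_trig_poly_if_trig_poly[of "4 * L" p] trig_poly_polynomial_sin[OF g(1), of "4 * L"] L
      by (simp add: p_def)
    show "\<bar>f x - p x\<bar> < \<delta>" if "x \<in> {-L..L}" for x
      using g(2)[of "sin (c * x)"] arcsin_sin_scaled[OF that] by (simp add: p_eq)
    show "\<bar>p x\<bar> < (SUP x\<in>{-L..L}. \<bar>f x\<bar>) + \<delta>" for x
      using g(2)[of "sin (c * x)"] f_le_Sup[OF arcsin_scaled_range, of "sin (c * x)"] by (simp add: p_eq)
  qed
qed

lemma AE_in_measure_support:
  assumes "sets M = sets (borel :: real measure)"
  shows "AE x in M. x \<in> measure_support M"
proof -
  define F where "F = {U :: real set. open U \<and> emeasure M U = 0}"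
  obtain F' where F': "F' \<subseteq> F" "countable F'" "\<Union>F' = \<Union>F"
    using Lindelof[of F] unfolding F_def by blast
  have "(\<Union>U\<in>F'. U) \<in> null_sets M"
    using F'(1,2) assms by (intro null_sets_UN') (auto simp: F_def null_sets_def)
  moreover have "{x \<in> space M. x \<notin> measure_support M} \<subseteq> (\<Union>U\<in>F'. U)"
    using F'(3) by (auto simp: measure_support_def F_def)
  ultimately show ?thesis
    by (rule AE_I')
qed

lemma AE_norm_convolution_le:
  fixes M N :: "'a::ordered_euclidean_space measure"
  assumes "sigma_finite_measure M" "sigma_finite_measure N"
    and [measurable_cong]: "sets M = sets borel" "sets N = sets borel"
    and "AE x in M. norm x \<le> r" "AE y in N. norm y \<le> s"
  shows "AE z in M \<star> N. norm z \<le> r + s"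
proof -
  interpret pair_sigma_finite M N
    using assms(1,2) by (simp add: pair_sigma_finite_def)
  have "AE x in M. AE y in N. norm (x + y) \<le> r + s"
    using assms(5) by eventually_elim
      (use assms(6) in \<open>eventually_elim, use norm_triangle_ineq in \<open>fastforce intro: order_trans\<close>\<close>)
  then have "AE z in M \<Otimes>\<^sub>M N. norm (fst z + snd z) \<le> r + s"
    by (subst AE_pair_iff[symmetric]) measurable
  then show ?thesis
    unfolding convolution_def by (subst AE_distr_iff) (measurable, simp add: case_prod_beta)
qed

lemma prob_space_convolution:
  fixes M N :: "'a::ordered_euclidean_space measure"
  assumes "prob_space M" "prob_space N" "sets M = sets borel" "sets N = sets borel"
  shows "prob_space (M \<star> N)"
proof -
  interpret pair_prob_space M N
    using assms(1,2) by (simp add: pair_prob_space_def pair_sigma_finite_def prob_space_imp_sigma_finite)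
  show ?thesis
    unfolding convolution_def using assms(3,4)
    by (intro prob_space_distr) (simp add: measurable_cong_sets[OF sets_pair_measure_cong[OF assms(3,4)] refl])
qed

lemma sets_conv_pow [simp]: "sets (conv_pow M n) = sets borel"
  by (cases n) simp_all

lemma prob_space_conv_pow:
  assumes "prob_space M" "sets M = sets borel"
  shows "prob_space (conv_pow M n)"
  by (induction n) (simp_all add: prob_space_return prob_space_convolution assms)

lemma AE_abs_conv_pow_le:
  assumes "prob_space M" "sets M = sets borel" "AE x in M. \<bar>x\<bar> \<le> d"
  shows "AE x in conv_pow M n. \<bar>x\<bar> \<le> real n * d"
proof (induction n)
  case 0
  show ?case
    unfolding conv_pow.simps by (simp add: AE_return)
next
  case (Suc n)
  have "AE x in M \<star> conv_pow M n. norm x \<le> d + real n * d"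
    using Suc assms prob_space_conv_pow[OF assms(1,2), of n]
    by (intro AE_norm_convolution_le) (auto simp: prob_space_imp_sigma_finite)
  then show ?case
    unfolding conv_pow.simps by (simp add: algebra_simps)
qed

lemma sum_weighted_nn_integral_less:
  fixes w :: "nat \<Rightarrow> real" and F :: "'a \<Rightarrow> real"
  assumes "\<And>n. n < N \<Longrightarrow> prob_space (\<mu> n)" "\<And>n. n < N \<Longrightarrow> AE y in \<mu> n. F y \<le> \<delta>"
    and "\<And>n. w n \<ge> 0" "\<delta> \<ge> 0" "(\<Sum>n<N. w n) * \<delta> < \<epsilon>"
  shows "(\<Sum>n<N. ennreal (w n) * (\<integral>\<^sup>+ y. ennreal (F y) \<partial>\<mu> n)) < ennreal \<epsilon>"
proof -
  have "(\<integral>\<^sup>+ y. ennreal (F y) \<partial>\<mu> n) \<le> ennreal \<delta>" if "n < N" for n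
  proof -
    interpret prob_space "\<mu> n"
      using assms(1) that .
    have "(\<integral>\<^sup>+ y. ennreal (F y) \<partial>\<mu> n) \<le> (\<integral>\<^sup>+ y. ennreal \<delta> \<partial>\<mu> n)"
      using assms(2)[OF that] by (intro nn_integral_mono_AE) (auto elim!: eventually_mono intro: ennreal_leI)
    then show ?thesis
      by (simp add: emeasure_space_1)
  qed
  then have "(\<Sum>n<N. ennreal (w n) * (\<integral>\<^sup>+ y. ennreal (F y) \<partial>\<mu> n)) \<le> (\<Sum>n<N. ennreal (w n) * ennreal \<delta>)"
    by (intro sum_mono mult_left_mono) auto
  also have "\<dots> = ennreal ((\<Sum>n<N. w n) * \<delta>)"
    using assms(3,4) by (simp add: ennreal_mult[symmetric] sum_distrib_right)
  also have "\<dots> < ennreal \<epsilon>"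
    using assms(3-5) by (subst ennreal_less_iff) (auto intro!: mult_nonneg_nonneg sum_nonneg)
  finally show ?thesis .
qed

lemma pos_below_with_scaled_below:
  fixes S \<epsilon> :: real
  assumes "S \<ge> 0" "\<epsilon> > 0"
  obtains \<delta> where "0 < \<delta>" "\<delta> < \<epsilon>" "S * \<delta> < \<epsilon>"
proof
  have "S * \<epsilon> \<ge> 0"
    using assms by simp
  then show "0 < \<epsilon> / (S + 2)" "\<epsilon> / (S + 2) < \<epsilon>" "S * (\<epsilon> / (S + 2)) < \<epsilon>"
    using assms by (simp_all add: field_simps add_pos_nonneg)
qed

lemma AE_abs_shifted_conv_pow_le:
  assumes "prob_space M" "sets M = sets borel" "AE y in M. \<bar>y\<bar> \<le> d" "\<bar>x\<bar> \<le> d"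
  shows "AE y in return borel x \<star> conv_pow M n. \<bar>y\<bar> \<le> real (Suc n) * d"
proof -
  have "AE y in return borel x \<star> conv_pow M n. norm y \<le> \<bar>x\<bar> + real n * d"
    using AE_abs_conv_pow_le[OF assms(1-3)] prob_space_conv_pow[OF assms(1,2)]
    by (intro AE_norm_convolution_le) (auto simp: AE_return prob_space_imp_sigma_finite prob_space_return)
  then show ?thesis
    by eventually_elim (use assms(4) in \<open>auto simp: algebra_simps\<close>)
qed

lemma weighted_conv_pow_errors_less:
  fixes F :: "real \<Rightarrow> real"
  assumes M: "prob_space M" "sets M = sets borel" "AE y in M. \<bar>y\<bar> \<le> d" and "d \<ge> 0"
    and F: "\<And>y. \<bar>y\<bar> \<le> real N * d \<Longrightarrow> F y \<le> \<delta>"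
    and w: "\<And>n. w n \<ge> 0" "\<delta> \<ge> 0" "(\<Sum>n<N. w n) * \<delta> < \<epsilon>"
  shows "\<bar>x\<bar> \<le> d \<Longrightarrow>
      (\<Sum>n<N. ennreal (w n) * (\<integral>\<^sup>+ y. ennreal (F y) \<partial>(return borel x \<star> conv_pow M n))) < ennreal \<epsilon>"
    and "(\<Sum>n<N. ennreal (w n) * (\<integral>\<^sup>+ y. ennreal (F y) \<partial>conv_pow M (Suc n))) < ennreal \<epsilon>"
proof -
  have AE_F: "AE y in \<mu>. F y \<le> \<delta>" if "AE y in \<mu>. \<bar>y\<bar> \<le> real (Suc n) * d" "n < N" for \<mu> n
  proof -
    have "real (Suc n) * d \<le> real N * d"
      using that(2) \<open>d \<ge> 0\<close> by (intro mult_right_mono) auto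
    show ?thesis
      using that(1) by eventually_elim (intro F, use \<open>real (Suc n) * d \<le> real N * d\<close> in linarith)
  qed
  show "(\<Sum>n<N. ennreal (w n) * (\<integral>\<^sup>+ y. ennreal (F y) \<partial>(return borel x \<star> conv_pow M n))) < ennreal \<epsilon>"
    if "\<bar>x\<bar> \<le> d"
  proof (intro sum_weighted_nn_integral_less)
    fix n assume "n < N"
    show "prob_space (return borel x \<star> conv_pow M n)"
      by (intro prob_space_convolution prob_space_return prob_space_conv_pow M) simp_all
    show "AE y in return borel x \<star> conv_pow M n. F y \<le> \<delta>"
      using AE_abs_shifted_conv_pow_le[OF M that] \<open>n < N\<close> by (rule AE_F)
  qed (use w in auto)
  show "(\<Sum>n<N. ennreal (w n) * (\<integral>\<^sup>+ y. ennreal (F y) \<partial>conv_pow M (Suc n))) < ennreal \<epsilon>"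
  proof (intro sum_weighted_nn_integral_less)
    fix n assume "n < N"
    show "prob_space (conv_pow M (Suc n))"
      by (rule prob_space_conv_pow[OF M(1,2)])
    show "AE y in conv_pow M (Suc n). F y \<le> \<delta>"
      using AE_abs_conv_pow_le[OF M] \<open>n < N\<close> by (rule AE_F)
  qed (use w in auto)
qed

theorem lemma3:
  fixes f :: "real \<Rightarrow> real" and a b lam d :: real and \<rho> :: "real measure"
  assumes f_cont: "continuous_on UNIV f"
    and a_pos: "a > 0"
    and f_bound: "\<And>x. \<bar>f x\<bar> \<le> a * cosh (b * x)"
    and lam_pos: "lam > 0"
    and rho_prob: "prob_space \<rho>"
    and rho_borel: "sets \<rho> = sets borel"
    and d_pos: "d > 0"
    and supp: "measure_support \<rho> \<subseteq> {-d..d}"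
  shows "\<forall>\<epsilon>>0. \<forall>n0::nat. n0 > 0 \<longrightarrow>
    (\<exists>p. real_trig_poly p
      \<and> (SUP x\<in>{-(real n0 * d)..real n0 * d}. \<bar>f x - p x\<bar>) < \<epsilon>
      \<and> (SUP x\<in>UNIV. \<bar>p x\<bar>) < (SUP x\<in>{-(real n0 * d)..real n0 * d}. \<bar>f x\<bar>) + \<epsilon>
      \<and> (\<forall>x\<in>measure_support \<rho>.
           (\<Sum>n<n0. ennreal (exp (-lam) * lam ^ n / fact (n + 1)) *
              (\<integral>\<^sup>+ y. ennreal \<bar>f y - p y\<bar> \<partial>(convolution (return borel x) (conv_pow \<rho> n)))) < ennreal \<epsilon>
         \<and> (\<Sum>n<n0. ennreal (exp (-lam) * lam ^ n / fact (n + 1)) *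
              (\<integral>\<^sup>+ y. ennreal \<bar>f y - p y\<bar> \<partial>(conv_pow \<rho> (Suc n)))) < ennreal \<epsilon>))"
proof (intro allI impI)
  fix \<epsilon> :: real and n0 :: nat
  assume \<epsilon>: "\<epsilon> > 0" and n0: "n0 > 0"
  let ?L = "real n0 * d" and ?w = "\<lambda>n::nat. exp (-lam) * lam ^ n / fact (n + 1)"
  have w_nonneg: "?w n \<ge> 0" for n
    using lam_pos by simp
  obtain \<delta> where \<delta>: "0 < \<delta>" "\<delta> < \<epsilon>" "(\<Sum>n<n0. ?w n) * \<delta> < \<epsilon>"
    using pos_below_with_scaled_below[OF sum_nonneg[OF w_nonneg] \<epsilon>] .
  obtain p where p: "real_trig_poly p" "\<And>x. x \<in> {-?L..?L} \<Longrightarrow> \<bar>f x - p x\<bar> < \<delta>"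
      "\<And>x. \<bar>p x\<bar> < (SUP x\<in>{-?L..?L}. \<bar>f x\<bar>) + \<delta>"
    using real_trig_poly_approximation[OF continuous_on_subset[OF f_cont subset_UNIV] _ \<delta>(1), of ?L] n0 d_pos
    by auto
  have error_le: "\<bar>f y - p y\<bar> \<le> \<delta>" if "\<bar>y\<bar> \<le> ?L" for y
    by (intro less_imp_le p(2)) (use that in \<open>simp add: abs_le_iff\<close>)
  have support_abs_le: "\<bar>x\<bar> \<le> d" if "x \<in> measure_support \<rho>" for x
    using subsetD[OF supp that] by (simp add: abs_le_iff)
  have AE_\<rho>: "AE y in \<rho>. \<bar>y\<bar> \<le> d"
    using AE_in_measure_support[OF rho_borel] by eventually_elim (rule support_abs_le)
  note errors = weighted_conv_pow_errors_less[OF rho_prob rho_borel AE_\<rho> _ error_le w_nonneg _ \<delta>(3)]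
  have "(SUP x\<in>{-?L..?L}. \<bar>f x - p x\<bar>) \<le> \<delta>" "(SUP x\<in>UNIV. \<bar>p x\<bar>) \<le> (SUP x\<in>{-?L..?L}. \<bar>f x\<bar>) + \<delta>"
    using n0 d_pos by (auto intro!: cSUP_least intro: less_imp_le p(2,3))
  then show "\<exists>p. real_trig_poly p
      \<and> (SUP x\<in>{-?L..?L}. \<bar>f x - p x\<bar>) < \<epsilon>
      \<and> (SUP x\<in>UNIV. \<bar>p x\<bar>) < (SUP x\<in>{-?L..?L}. \<bar>f x\<bar>) + \<epsilon>
      \<and> (\<forall>x\<in>measure_support \<rho>.
           (\<Sum>n<n0. ennreal (?w n) *
              (\<integral>\<^sup>+ y. ennreal \<bar>f y - p y\<bar> \<partial>(return borel x \<star> conv_pow \<rho> n))) < ennreal \<epsilon>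
         \<and> (\<Sum>n<n0. ennreal (?w n) *
              (\<integral>\<^sup>+ y. ennreal \<bar>f y - p y\<bar> \<partial>conv_pow \<rho> (Suc n))) < ennreal \<epsilon>)"
    using p(1) \<delta> d_pos errors support_abs_le by (intro exI[of _ p]) auto
qed

end
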